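(* Let $E$ be a directed graph, let $V\subset E^0$, let $R$ be a commutative ring with identity, and let $\{p_v,s_e,s_{e^*}\}$ be the universal generating Leavitt $E$-family in $L_R(E)$. Let $M=\operatorname{span}_R\{s_\mu s_{\nu^*}:\mu,\nu\in E^*,\ r(\mu)\in V\}$ and $M^*=\operatorname{span}_R\{s_\mu s_{\nu^*}:\mu,\nu\in E^*,\ r(\nu)\in V\}$, and let $M^*M$ be the $R$-span of all products $nm$ with $n\in M^*$, $m\in M$. Then $M^*M=L_R(E)$ (i.e. $V$ is full) if and only if $\Sigma H(V)=E^0$.
   Context: A directed graph $E=(E^0,E^1,r,s)$ has countable vertex and edge sets with range and source maps $r,s:E^1\to E^0$. A vertex $v$ is singular if $r^{-1}(v)$ is empty or infinite. Finite paths $\mu=\mu_1\cdots\mu_n$ satisfy $s(\mu_i)=r(\mu_{i+1})$, with $r(\mu)=r(\mu_1)$, $s(\mu)=s(\mu_n)$; vertices are paths of length $0$; $E^*$ is the set of finite paths. $L_R(E)$ is the universal $R$-algebra generated by mutually orthogonal idempotents $p_v$ ($v\in E^0$) and elements $s_e,s_{e^*}$ ($e\in E^1$) subject to $p_{r(e)}s_e=s_e=s_ep_{s(e)}$, $p_{s(e)}s_{e^*}=s_{e^*}=s_{e^*}p_{r(e)}$, $s_{e^*}s_f=\delta_{e,f}p_{s(e)}$, and $p_v=\sum_{r(e)=v}s_es_{e^*}$ for non-singular $v$; $s_\mu=s_{\mu_1}\cdots s_{\mu_n}$, $s_{\mu^*}=s_{\mu_n^*}\cdots s_{\mu_1^*}$,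 $s_v=s_{v^*}=p_v$. Write $v\le w$ if there is $\mu\in E^*$ with $r(\mu)=v$, $s(\mu)=w$. A set $H\subset E^0$ is hereditary if $v\in H$, $v\le w$ imply $w\in H$; it is saturated if whenever $0<|r^{-1}(v)|<\infty$ and $s(r^{-1}(v))\subset H$ then $v\in H$. $\Sigma H(V)$ denotes the smallest saturated hereditary subset of $E^0$ containing $V$. *)

theory Defs
  imports "HOL-Library.Poly_Mapping" "HOL-Library.Countable_Set"
begin

datatype ('v,'e) gen = P 'v | S 'e | SS 'e

text \<open>Elements of the free algebra: finitely supported R-valued functions on words
  (lists of generators); multiplication is concatenation of words.\<close>

definition fmul :: "('g list \<Rightarrow>\<^sub>0 'r::comm_ring_1) \<Rightarrow> ('g list \<Rightarrow>\<^sub>0 'r) \<Rightarrow> ('g list \<Rightarrow>\<^sub>0 'r)" where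
  "fmul p q = (\<Sum>a\<in>Poly_Mapping.keys p. \<Sum>b\<in>Poly_Mapping.keys q. Poly_Mapping.single (a @ b) (Poly_Mapping.lookup p a * Poly_Mapping.lookup q b))"

definition fsmult :: "'r::comm_ring_1 \<Rightarrow> ('g list \<Rightarrow>\<^sub>0 'r) \<Rightarrow> ('g list \<Rightarrow>\<^sub>0 'r)" where
  "fsmult c p = fmul (Poly_Mapping.single [] c) p"

definition mon :: "'g list \<Rightarrow> ('g list \<Rightarrow>\<^sub>0 'r::comm_ring_1)" where
  "mon w = Poly_Mapping.single w 1"

definition pv :: "'v \<Rightarrow> (('v,'e) gen list \<Rightarrow>\<^sub>0 'r::comm_ring_1)" where
  "pv v = mon [P v]"
definition se :: "'e \<Rightarrow> (('v,'e) gen list \<Rightarrow>\<^sub>0 'r::comm_ring_1)" where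
  "se e = mon [S e]"
definition ses :: "'e \<Rightarrow> (('v,'e) gen list \<Rightarrow>\<^sub>0 'r::comm_ring_1)" where
  "ses e = mon [SS e]"

definition gen_ok :: "'v set \<Rightarrow> 'e set \<Rightarrow> ('v,'e) gen \<Rightarrow> bool" where
  "gen_ok E0 E1 g = (case g of P v \<Rightarrow> v \<in> E0 | S e \<Rightarrow> e \<in> E1 | SS e \<Rightarrow> e \<in> E1)"

text \<open>The (non-unital) free algebra: spanned by nonempty words in the generators of E.\<close>
definition free_alg :: "'v set \<Rightarrow> 'e set \<Rightarrow> (('v,'e) gen list \<Rightarrow>\<^sub>0 'r::comm_ring_1) set" where
  "free_alg E0 E1 = {x. \<forall>w\<in>Poly_Mapping.keys x. w \<noteq> [] \<and> (\<forall>g\<in>set w. gen_ok E0 E1 g)}"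

text \<open>Two-sided ideal generated by the Leavitt E-family relations; L_R(E) is
  free_alg modulo this ideal.\<close>
inductive_set lp_ideal :: "'v set \<Rightarrow> 'e set \<Rightarrow> ('e \<Rightarrow> 'v) \<Rightarrow> ('e \<Rightarrow> 'v)
    \<Rightarrow> (('v,'e) gen list \<Rightarrow>\<^sub>0 'r::comm_ring_1) set"
  for E0 :: "'v set" and E1 :: "'e set" and r :: "'e \<Rightarrow> 'v" and s :: "'e \<Rightarrow> 'v" where
  idem: "v \<in> E0 \<Longrightarrow> fmul (pv v) (pv v) - pv v \<in> lp_ideal E0 E1 r s"
| orth: "v \<in> E0 \<Longrightarrow> w \<in> E0 \<Longrightarrow> v \<noteq> w \<Longrightarrow> fmul (pv v) (pv w) \<in> lp_ideal E0 E1 r s"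
| rs: "e \<in> E1 \<Longrightarrow> fmul (pv (r e)) (se e) - se e \<in> lp_ideal E0 E1 r s"
| sr: "e \<in> E1 \<Longrightarrow> fmul (se e) (pv (s e)) - se e \<in> lp_ideal E0 E1 r s"
| rss: "e \<in> E1 \<Longrightarrow> fmul (pv (s e)) (ses e) - ses e \<in> lp_ideal E0 E1 r s"
| ssr: "e \<in> E1 \<Longrightarrow> fmul (ses e) (pv (r e)) - ses e \<in> lp_ideal E0 E1 r s"
| ck1: "e \<in> E1 \<Longrightarrow> f \<in> E1 \<Longrightarrow>
        fmul (ses e) (se f) - (if e = f then pv (s e) else 0) \<in> lp_ideal E0 E1 r s"
| ck2: "v \<in> E0 \<Longrightarrow> {e\<in>E1. r e = v} \<noteq> {} \<Longrightarrow> finite {e\<in>E1. r e = v} \<Longrightarrow>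
        pv v - (\<Sum>e\<in>{e\<in>E1. r e = v}. fmul (se e) (ses e)) \<in> lp_ideal E0 E1 r s"
| zero: "0 \<in> lp_ideal E0 E1 r s"
| add: "a \<in> lp_ideal E0 E1 r s \<Longrightarrow> b \<in> lp_ideal E0 E1 r s \<Longrightarrow> a + b \<in> lp_ideal E0 E1 r s"
| left: "a \<in> lp_ideal E0 E1 r s \<Longrightarrow> fmul x a \<in> lp_ideal E0 E1 r s"
| right: "a \<in> lp_ideal E0 E1 r s \<Longrightarrow> fmul a x \<in> lp_ideal E0 E1 r s"

inductive_set rspan :: "('g list \<Rightarrow>\<^sub>0 'r::comm_ring_1) set \<Rightarrow> ('g list \<Rightarrow>\<^sub>0 'r) set"
  for X :: "('g list \<Rightarrow>\<^sub>0 'r::comm_ring_1) set" where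
  zero: "0 \<in> rspan X"
| base: "x \<in> X \<Longrightarrow> x \<in> rspan X"
| add: "a \<in> rspan X \<Longrightarrow> b \<in> rspan X \<Longrightarrow> a + b \<in> rspan X"
| smult: "a \<in> rspan X \<Longrightarrow> fsmult c a \<in> rspan X"

text \<open>A finite path is either a vertex (Inl v, length 0) or a nonempty list of edges
  mu_1 ... mu_n with s(mu_i) = r(mu_(i+1)).\<close>
type_synonym ('v,'e) fpath = "'v + 'e list"

fun path_ok :: "'v set \<Rightarrow> 'e set \<Rightarrow> ('e \<Rightarrow> 'v) \<Rightarrow> ('e \<Rightarrow> 'v) \<Rightarrow> ('v,'e) fpath \<Rightarrow> bool" where
  "path_ok E0 E1 r s (Inl v) = (v \<in> E0)"
| "path_ok E0 E1 r s (Inr es) = (es \<noteq> [] \<and> set es \<subseteq> E1 \<and>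
      (\<forall>i. Suc i < length es \<longrightarrow> s (es ! i) = r (es ! Suc i)))"

fun prange :: "('e \<Rightarrow> 'v) \<Rightarrow> ('v,'e) fpath \<Rightarrow> 'v" where
  "prange r (Inl v) = v"
| "prange r (Inr es) = r (hd es)"

fun psource :: "('e \<Rightarrow> 'v) \<Rightarrow> ('v,'e) fpath \<Rightarrow> 'v" where
  "psource s (Inl v) = v"
| "psource s (Inr es) = s (last es)"

fun spath :: "('v,'e) fpath \<Rightarrow> (('v,'e) gen list \<Rightarrow>\<^sub>0 'r::comm_ring_1)" where
  "spath (Inl v) = pv v"
| "spath (Inr es) = mon (map S es)"

fun spath_star :: "('v,'e) fpath \<Rightarrow> (('v,'e) gen list \<Rightarrow>\<^sub>0 'r::comm_ring_1)" where
  "spath_star (Inl v) = pv v"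
| "spath_star (Inr es) = mon (rev (map SS es))"

definition Mspace :: "'v set \<Rightarrow> 'e set \<Rightarrow> ('e \<Rightarrow> 'v) \<Rightarrow> ('e \<Rightarrow> 'v) \<Rightarrow> 'v set
    \<Rightarrow> (('v,'e) gen list \<Rightarrow>\<^sub>0 'r::comm_ring_1) set" where
  "Mspace E0 E1 r s V = rspan {fmul (spath \<mu>) (spath_star \<nu>) | \<mu> \<nu>.
      path_ok E0 E1 r s \<mu> \<and> path_ok E0 E1 r s \<nu> \<and> prange r \<mu> \<in> V}"

definition Mstar_space :: "'v set \<Rightarrow> 'e set \<Rightarrow> ('e \<Rightarrow> 'v) \<Rightarrow> ('e \<Rightarrow> 'v) \<Rightarrow> 'v set
    \<Rightarrow> (('v,'e) gen list \<Rightarrow>\<^sub>0 'r::comm_ring_1) set" where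
  "Mstar_space E0 E1 r s V = rspan {fmul (spath \<mu>) (spath_star \<nu>) | \<mu> \<nu>.
      path_ok E0 E1 r s \<mu> \<and> path_ok E0 E1 r s \<nu> \<and> prange r \<nu> \<in> V}"

definition MstarM :: "'v set \<Rightarrow> 'e set \<Rightarrow> ('e \<Rightarrow> 'v) \<Rightarrow> ('e \<Rightarrow> 'v) \<Rightarrow> 'v set
    \<Rightarrow> (('v,'e) gen list \<Rightarrow>\<^sub>0 'r::comm_ring_1) set" where
  "MstarM E0 E1 r s V = rspan {fmul n m | n m.
      n \<in> Mstar_space E0 E1 r s V \<and> m \<in> Mspace E0 E1 r s V}"

text \<open>M*M = L_R(E), read through the quotient map free_alg \<rightarrow> L_R(E):
  every element of the free algebra is congruent modulo the Leavitt ideal to an element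
  of (the lift of) M*M.\<close>
definition is_full :: "'r::comm_ring_1 itself \<Rightarrow> 'v set \<Rightarrow> 'e set \<Rightarrow> ('e \<Rightarrow> 'v) \<Rightarrow> ('e \<Rightarrow> 'v)
    \<Rightarrow> 'v set \<Rightarrow> bool" where
  "is_full (_ :: 'r itself) E0 E1 r s V \<longleftrightarrow>
     (\<forall>x \<in> (free_alg E0 E1 :: (('v,'e) gen list \<Rightarrow>\<^sub>0 'r) set).
        \<exists>y \<in> MstarM E0 E1 r s V. x - y \<in> lp_ideal E0 E1 r s)"

definition path_le :: "'v set \<Rightarrow> 'e set \<Rightarrow> ('e \<Rightarrow> 'v) \<Rightarrow> ('e \<Rightarrow> 'v) \<Rightarrow> 'v \<Rightarrow> 'v \<Rightarrow> bool" where
  "path_le E0 E1 r s v w \<longleftrightarrow> (\<exists>\<mu>. path_ok E0 E1 r s \<mu> \<and> prange r \<mu> = v \<and> psource s \<mu> = w)"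

definition hereditary :: "'v set \<Rightarrow> 'e set \<Rightarrow> ('e \<Rightarrow> 'v) \<Rightarrow> ('e \<Rightarrow> 'v) \<Rightarrow> 'v set \<Rightarrow> bool" where
  "hereditary E0 E1 r s H \<longleftrightarrow> (\<forall>v\<in>H. \<forall>w. path_le E0 E1 r s v w \<longrightarrow> w \<in> H)"

definition saturated :: "'v set \<Rightarrow> 'e set \<Rightarrow> ('e \<Rightarrow> 'v) \<Rightarrow> ('e \<Rightarrow> 'v) \<Rightarrow> 'v set \<Rightarrow> bool" where
  "saturated E0 E1 r s H \<longleftrightarrow>
     (\<forall>v\<in>E0. {e\<in>E1. r e = v} \<noteq> {} \<and> finite {e\<in>E1. r e = v} \<and> s ` {e\<in>E1. r e = v} \<subseteq> H
        \<longrightarrow> v \<in> H)"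

definition SigmaH :: "'v set \<Rightarrow> 'e set \<Rightarrow> ('e \<Rightarrow> 'v) \<Rightarrow> ('e \<Rightarrow> 'v) \<Rightarrow> 'v set \<Rightarrow> 'v set" where
  "SigmaH E0 E1 r s V = \<Inter>{H. H \<subseteq> E0 \<and> V \<subseteq> H \<and> hereditary E0 E1 r s H \<and> saturated E0 E1 r s H}"

end

(*
  Sufficiency: call a vertex v good if the two-sided ideal generated by p_v lies in M*M modulo
  the Leavitt relations. A word times p_u reduces to 0 or to a monomial s_mu s_nu* with r(nu) = u,
  and p_u times a word to 0 or to one with r(mu) = u; since p_u = p_u p_u, every u in V is good.
  The relations p_(s e) = s_e* p_(r e) s_e and p_v = sum_(r e = v) s_e p_(s e) s_e* make the good
  vertices a hereditary saturated set, so Sigma H(V) = E^0 makes every vertex good, and then every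
  word, being congruent to some w' p_v w'', lies in M*M.

  Necessity: put H = Sigma H(V) and consider the paths that avoid H and are infinite or stop at a
  vertex that is not regular. On R-valued functions on these paths p_v acts by restriction and
  s_e, s_e* by removing and prepending the edge e; as H is hereditary the paths are preserved, and
  the Leavitt relations hold. Every s_mu with r(mu) in H, hence all of M and M*M, acts as zero.
  As H is saturated, such a path starts at every vertex w outside H, and p_w acts on it as the
  identity, so p_w is not in M*M.
*)

theory Submission
  imports Defs
begin

(* Words under concatenation form a monoid; with this instance the free algebra over 'g is the
   Poly_Mapping monoid ring of 'g list, and fmul is its multiplication (fmul_eq_times). *)
instantiation list :: (type) monoid_add
begin

definition zero_list :: "'a list" where
  "zero_list = []"

definition plus_list :: "'a list \<Rightarrow> 'a list \<Rightarrow> 'a list" where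
  "plus_list = append"

instance
  by standard (simp_all add: zero_list_def plus_list_def)

end

lemma sum_single_lookup:
  "(\<Sum>k\<in>Poly_Mapping.keys p. Poly_Mapping.single k (Poly_Mapping.lookup p k)) = p"
proof (rule poly_mapping_eqI)
  fix k
  have "Poly_Mapping.lookup (\<Sum>w\<in>Poly_Mapping.keys p. Poly_Mapping.single w (Poly_Mapping.lookup p w)) k
      = (\<Sum>w\<in>Poly_Mapping.keys p. if w = k then Poly_Mapping.lookup p w else 0)"
    by (simp add: lookup_sum lookup_single when_def)
  also have "\<dots> = Poly_Mapping.lookup p k"
    by (simp add: in_keys_iff)
  finally show "Poly_Mapping.lookup (\<Sum>w\<in>Poly_Mapping.keys p. Poly_Mapping.single w (Poly_Mapping.lookup p w)) k
      = Poly_Mapping.lookup p k" .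
qed

lemma fmul_eq_times: "fmul p q = p * q"
proof -
  have "p * q = (\<Sum>a\<in>Poly_Mapping.keys p. Poly_Mapping.single a (Poly_Mapping.lookup p a))
      * (\<Sum>b\<in>Poly_Mapping.keys q. Poly_Mapping.single b (Poly_Mapping.lookup q b))"
    by (simp only: sum_single_lookup)
  then show ?thesis
    by (simp add: fmul_def sum_distrib_left sum_distrib_right mult_single plus_list_def
        sum.swap[of _ "Poly_Mapping.keys q"])
qed

lemma fsmult_eq_times: "fsmult c p = Poly_Mapping.single [] c * p"
  by (simp add: fsmult_def fmul_eq_times)

lemma mon_append: "mon (u @ v) = mon u * mon v"
  by (simp add: mon_def mult_single plus_list_def)

lemma mon_Nil [simp]: "mon [] = 1"
  by (simp add: mon_def flip: zero_list_def)

lemma mon_Cons: "mon (g # w) = mon [g] * mon w"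
  using mon_append[of "[g]" w] by simp

lemma single_Nil_times_mon: "Poly_Mapping.single [] c * mon w = Poly_Mapping.single w c"
  by (simp add: mon_def mult_single plus_list_def)

lemma fmul_mon: "fmul (mon u) (mon v) = mon (u @ v)"
  by (simp add: fmul_eq_times mon_append)

lemma pv_eq_mon: "pv v = mon [P v]"
  and se_eq_mon: "se e = mon [S e]"
  and ses_eq_mon: "ses e = mon [SS e]"
  by (simp_all add: pv_def se_def ses_def)

lemma spath_Cons: "spath (Inr (e # es)) = se e * mon (map S es)"
  by (simp add: se_eq_mon flip: mon_append)

lemma spath_star_snoc: "spath_star (Inr (es @ [e])) = ses e * mon (rev (map SS es))"
  by (simp add: ses_eq_mon flip: mon_append)

definition path_monomial :: "('v,'e) fpath \<Rightarrow> ('v,'e) fpath \<Rightarrow> (('v,'e) gen list \<Rightarrow>\<^sub>0 'r::comm_ring_1)" where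
  "path_monomial \<mu> \<nu> = spath \<mu> * spath_star \<nu>"

fun pcons :: "'e \<Rightarrow> ('v,'e) fpath \<Rightarrow> ('v,'e) fpath" where
  "pcons e (Inl v) = Inr [e]"
| "pcons e (Inr es) = Inr (e # es)"

fun psnoc :: "('v,'e) fpath \<Rightarrow> 'e \<Rightarrow> ('v,'e) fpath" where
  "psnoc (Inl v) e = Inr [e]"
| "psnoc (Inr es) e = Inr (es @ [e])"

lemma psource_psnoc [simp]: "psource s (psnoc \<nu> e) = s e"
  by (cases \<nu>) simp_all

lemma prange_psnoc:
  "path_ok E0 E1 r s \<nu> \<Longrightarrow> psource s \<nu> = r e \<Longrightarrow> prange r (psnoc \<nu> e) = prange r \<nu>"
  by (cases \<nu>) auto

lemma path_ok_Cons_Cons: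
  "path_ok E0 E1 r s (Inr (e # f # fs)) \<longleftrightarrow> e \<in> E1 \<and> s e = r f \<and> path_ok E0 E1 r s (Inr (f # fs))"
  by (auto simp: less_Suc_eq_0_disj)

lemma path_ok_pcons:
  assumes "e \<in> E1" "path_ok E0 E1 r s \<mu>" "prange r \<mu> = s e"
  shows "path_ok E0 E1 r s (pcons e \<mu>)"
proof (cases \<mu>)
  case (Inr es)
  then obtain f fs where "es = f # fs"
    using assms(2) by (cases es) auto
  then show ?thesis
    using assms Inr by (simp only: pcons.simps path_ok_Cons_Cons) simp
qed (use assms in simp)

lemma path_ok_psnoc:
  assumes "e \<in> E1" "path_ok E0 E1 r s \<nu>" "psource s \<nu> = r e"
  shows "path_ok E0 E1 r s (psnoc \<nu> e)"
proof (cases \<nu>)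
  case (Inr es)
  have "s ((es @ [e]) ! i) = r ((es @ [e]) ! Suc i)" if "Suc i < length (es @ [e])" for i
  proof (cases "Suc i < length es")
    case True
    then show ?thesis
      using assms(2) Inr by (simp add: nth_append)
  next
    case False
    then have "i = length es - 1" "es \<noteq> []"
      using that assms(2) Inr by auto
    then show ?thesis
      using assms(3) Inr by (simp add: nth_append last_conv_nth)
  qed
  then show ?thesis
    using assms(1,2) Inr by auto
qed (use assms in simp)

lemma psource_mem_if_edge_closed:
  assumes "\<And>e. e \<in> E1 \<Longrightarrow> r e \<in> H \<Longrightarrow> s e \<in> H"
  shows "path_ok E0 E1 r s (Inr (e # es)) \<Longrightarrow> r e \<in> H \<Longrightarrow> s (last (e # es)) \<in> H"
proof (induction es arbitrary: e)
  case Nil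
  then show ?case
    using assms by simp
next
  case (Cons f fs)
  have "e \<in> E1" "s e = r f" and path: "path_ok E0 E1 r s (Inr (f # fs))"
    using Cons.prems(1) path_ok_Cons_Cons[of E0 E1 r s e f fs] by simp_all
  then have "r f \<in> H"
    using assms Cons.prems(2) by metis
  then show ?case
    using Cons.IH[OF path] by simp
qed

lemma hereditaryI_edges:
  assumes "\<And>e. e \<in> E1 \<Longrightarrow> r e \<in> H \<Longrightarrow> s e \<in> H"
  shows "hereditary E0 E1 r s H"
  unfolding hereditary_def path_le_def
proof (intro ballI allI impI)
  fix v w
  assume "v \<in> H" "\<exists>\<mu>. path_ok E0 E1 r s \<mu> \<and> prange r \<mu> = v \<and> psource s \<mu> = w"
  then obtain \<mu> where \<mu>: "path_ok E0 E1 r s \<mu>" "prange r \<mu> \<in> H" "psource s \<mu> = w"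
    by blast
  show "w \<in> H"
  proof (cases \<mu>)
    case (Inr es)
    with \<mu> obtain e es' where "es = e # es'"
      by (cases es) auto
    with \<mu> Inr have p: "path_ok E0 E1 r s (Inr (e # es'))" "r e \<in> H" "s (last (e # es')) = w"
      by (simp_all only: prange.simps psource.simps list.sel)
    show ?thesis
      using psource_mem_if_edge_closed[OF assms p(1,2)] p(3) by simp
  qed (use \<mu> in simp)
qed

lemma hereditary_edge:
  assumes "hereditary E0 E1 r s H" "e \<in> E1" "r e \<in> H"
  shows "s e \<in> H"
proof -
  have "path_le E0 E1 r s (r e) (s e)"
    unfolding path_le_def using assms(2) by (intro exI[of _ "Inr [e]"]) simp
  then show ?thesis
    using assms(1,3) unfolding hereditary_def by blast
qed

lemma SigmaH_least:
  "H \<subseteq> E0 \<Longrightarrow> V \<subseteq> H \<Longrightarrow> hereditary E0 E1 r s H \<Longrightarrow> saturated E0 E1 r s H \<Longrightarrow>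
    SigmaH E0 E1 r s V \<subseteq> H"
  unfolding SigmaH_def by blast

lemma subset_SigmaH: "V \<subseteq> SigmaH E0 E1 r s V"
  unfolding SigmaH_def by blast

lemma hereditary_SigmaH: "hereditary E0 E1 r s (SigmaH E0 E1 r s V)"
  unfolding hereditary_def[of _ _ _ _ "SigmaH E0 E1 r s V"]
proof (intro ballI allI impI)
  fix v w
  assume v: "v \<in> SigmaH E0 E1 r s V" and vw: "path_le E0 E1 r s v w"
  show "w \<in> SigmaH E0 E1 r s V"
    unfolding SigmaH_def
  proof (rule InterI)
    fix H
    assume H: "H \<in> {H. H \<subseteq> E0 \<and> V \<subseteq> H \<and> hereditary E0 E1 r s H \<and> saturated E0 E1 r s H}"
    have "v \<in> H"
      using v H unfolding SigmaH_def by (rule InterD)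
    then show "w \<in> H"
      using H vw unfolding hereditary_def by blast
  qed
qed

lemma saturated_SigmaH: "saturated E0 E1 r s (SigmaH E0 E1 r s V)"
  unfolding saturated_def[of _ _ _ _ "SigmaH E0 E1 r s V"]
proof (intro ballI impI)
  fix v
  let ?A = "{e\<in>E1. r e = v}"
  assume v: "v \<in> E0" and A: "?A \<noteq> {} \<and> finite ?A \<and> s ` ?A \<subseteq> SigmaH E0 E1 r s V"
  show "v \<in> SigmaH E0 E1 r s V"
    unfolding SigmaH_def
  proof (rule InterI)
    fix H
    assume H: "H \<in> {H. H \<subseteq> E0 \<and> V \<subseteq> H \<and> hereditary E0 E1 r s H \<and> saturated E0 E1 r s H}"
    then have "s ` ?A \<subseteq> H"
      using A unfolding SigmaH_def by blast
    then show "v \<in> H"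
      using H v A unfolding saturated_def by blast
  qed
qed

section \<open>A representation on paths\<close>

(* (v, f) is the path that starts at the vertex v and follows the edges f 0, f 1, ...;
   f i = None once the path has stopped. *)
type_synonym ('v,'e) point = "'v \<times> (nat \<Rightarrow> 'e option)"

definition gen_act :: "'e set \<Rightarrow> ('e \<Rightarrow> 'v) \<Rightarrow> ('e \<Rightarrow> 'v) \<Rightarrow> ('v,'e) gen \<Rightarrow> ('v,'e) point \<Rightarrow> ('v,'e) point option"
  where
  "gen_act E1 r s g \<xi> = (case g of
       P v \<Rightarrow> if fst \<xi> = v then Some \<xi> else None
     | S e \<Rightarrow> if snd \<xi> 0 = Some e then Some (s e, \<lambda>i. snd \<xi> (Suc i)) else None
     | SS e \<Rightarrow> if e \<in> E1 \<and> fst \<xi> = s e then Some (r e, case_nat (Some e) (snd \<xi>)) else None)"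

fun word_act :: "'e set \<Rightarrow> ('e \<Rightarrow> 'v) \<Rightarrow> ('e \<Rightarrow> 'v) \<Rightarrow> ('v,'e) gen list \<Rightarrow> ('v,'e) point \<Rightarrow> ('v,'e) point option"
  where
  "word_act E1 r s [] \<xi> = Some \<xi>"
| "word_act E1 r s (g # w) \<xi> = Option.bind (gen_act E1 r s g \<xi>) (word_act E1 r s w)"

definition word_op :: "'e set \<Rightarrow> ('e \<Rightarrow> 'v) \<Rightarrow> ('e \<Rightarrow> 'v) \<Rightarrow> ('v,'e) gen list
    \<Rightarrow> (('v,'e) point \<Rightarrow> 'r::comm_ring_1) \<Rightarrow> ('v,'e) point \<Rightarrow> 'r" where
  "word_op E1 r s w F \<xi> = (case word_act E1 r s w \<xi> of None \<Rightarrow> 0 | Some \<eta> \<Rightarrow> F \<eta>)"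

definition rep :: "'e set \<Rightarrow> ('e \<Rightarrow> 'v) \<Rightarrow> ('e \<Rightarrow> 'v) \<Rightarrow> (('v,'e) gen list \<Rightarrow>\<^sub>0 'r::comm_ring_1)
    \<Rightarrow> (('v,'e) point \<Rightarrow> 'r) \<Rightarrow> ('v,'e) point \<Rightarrow> 'r" where
  "rep E1 r s p F \<xi> = (\<Sum>w\<in>Poly_Mapping.keys p. Poly_Mapping.lookup p w * word_op E1 r s w F \<xi>)"

lemma word_act_append:
  "word_act E1 r s (u @ w) \<xi> = Option.bind (word_act E1 r s u \<xi>) (word_act E1 r s w)"
  by (induction u arbitrary: \<xi>) (auto simp: bind_eq_None_conv split: Option.bind_split)

lemma word_op_append: "word_op E1 r s (u @ w) F \<xi> = word_op E1 r s u (word_op E1 r s w F) \<xi>"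
  by (auto simp: word_op_def word_act_append split: option.split)

lemma word_op_sum:
  "word_op E1 r s u (\<lambda>\<eta>. \<Sum>b\<in>B. c b * G b \<eta>) \<xi> = (\<Sum>b\<in>B. c b * word_op E1 r s u (G b) \<xi>)"
  by (simp add: word_op_def split: option.split)

lemma rep_superset:
  "finite K \<Longrightarrow> Poly_Mapping.keys p \<subseteq> K \<Longrightarrow>
    rep E1 r s p F \<xi> = (\<Sum>w\<in>K. Poly_Mapping.lookup p w * word_op E1 r s w F \<xi>)"
  unfolding rep_def by (rule sum.mono_neutral_left) (auto simp: in_keys_iff)

lemma rep_add: "rep E1 r s (p + q) F \<xi> = rep E1 r s p F \<xi> + rep E1 r s q F \<xi>"
proof -
  let ?K = "Poly_Mapping.keys p \<union> Poly_Mapping.keys q"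
  have "Poly_Mapping.keys (p + q) \<subseteq> ?K"
    by (rule keys_add)
  then show ?thesis
    by (simp add: rep_superset[of ?K] lookup_add distrib_right sum.distrib)
qed

lemma rep_zero [simp]: "rep E1 r s 0 F \<xi> = 0"
  by (simp add: rep_def)

lemma rep_diff: "rep E1 r s (p - q) F \<xi> = rep E1 r s p F \<xi> - rep E1 r s q F \<xi>"
  using rep_add[of E1 r s "p - q" q F \<xi>] by (simp add: eq_diff_eq)

lemma rep_sum: "rep E1 r s (\<Sum>i\<in>I. f i) F \<xi> = (\<Sum>i\<in>I. rep E1 r s (f i) F \<xi>)"
  by (induction I rule: infinite_finite_induct) (auto simp: rep_add)

lemma rep_single: "rep E1 r s (Poly_Mapping.single w c) F \<xi> = c * word_op E1 r s w F \<xi>"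
  by (simp add: rep_def)

lemma rep_mon: "rep E1 r s (mon w) F \<xi> = word_op E1 r s w F \<xi>"
  by (simp add: mon_def rep_single)

lemma rep_times: "rep E1 r s (p * q) F \<xi> = rep E1 r s p (rep E1 r s q F) \<xi>"
proof -
  have "rep E1 r s (p * q) F \<xi> = (\<Sum>a\<in>Poly_Mapping.keys p. \<Sum>b\<in>Poly_Mapping.keys q.
      Poly_Mapping.lookup p a * Poly_Mapping.lookup q b * word_op E1 r s (a @ b) F \<xi>)"
    by (simp add: fmul_eq_times[symmetric] fmul_def rep_sum rep_single)
  also have "\<dots> = (\<Sum>a\<in>Poly_Mapping.keys p. Poly_Mapping.lookup p a *
      (\<Sum>b\<in>Poly_Mapping.keys q. Poly_Mapping.lookup q b * word_op E1 r s a (word_op E1 r s b F) \<xi>))"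
    by (simp add: word_op_append sum_distrib_left mult.assoc)
  also have "\<dots> = rep E1 r s p (rep E1 r s q F) \<xi>"
    unfolding rep_def by (simp add: word_op_sum)
  finally show ?thesis .
qed

locale leavitt_graph =
  fixes E0 :: "'v set" and E1 :: "'e set" and r s :: "'e \<Rightarrow> 'v"
  assumes range_in_E0: "e \<in> E1 \<Longrightarrow> r e \<in> E0"
    and source_in_E0: "e \<in> E1 \<Longrightarrow> s e \<in> E0"
begin

abbreviation I :: "(('v,'e) gen list \<Rightarrow>\<^sub>0 'r::comm_ring_1) set" where
  "I \<equiv> lp_ideal E0 E1 r s"

abbreviation word_ok :: "('v,'e) gen list \<Rightarrow> bool" where
  "word_ok w \<equiv> \<forall>g\<in>set w. gen_ok E0 E1 g"

definition regular :: "'v \<Rightarrow> bool" where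
  "regular u \<longleftrightarrow> {e\<in>E1. r e = u} \<noteq> {} \<and> finite {e\<in>E1. r e = u}"

lemma prange_in_E0: "path_ok E0 E1 r s \<mu> \<Longrightarrow> prange r \<mu> \<in> E0"
  by (cases \<mu>) (auto intro!: range_in_E0 simp: subset_iff)

lemma psource_in_E0: "path_ok E0 E1 r s \<mu> \<Longrightarrow> psource s \<mu> \<in> E0"
  by (cases \<mu>) (auto intro!: source_in_E0 simp: subset_iff)

lemma SigmaH_subset_E0:
  assumes "V \<subseteq> E0"
  shows "SigmaH E0 E1 r s V \<subseteq> E0"
proof (rule SigmaH_least[OF subset_refl assms])
  show "hereditary E0 E1 r s E0"
    unfolding hereditary_def path_le_def using psource_in_E0 by blast
  show "saturated E0 E1 r s E0"
    unfolding saturated_def by blast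
qed

lemma ideal_mult_left: "a \<in> I \<Longrightarrow> x * a \<in> I"
  using lp_ideal.left[of a E0 E1 r s x] by (simp add: fmul_eq_times)

lemma ideal_mult_right: "a \<in> I \<Longrightarrow> a * x \<in> I"
  using lp_ideal.right[of a E0 E1 r s x] by (simp add: fmul_eq_times)

lemma ideal_uminus: "a \<in> I \<Longrightarrow> - a \<in> I"
  using ideal_mult_left[of a "- 1"] by (simp only: mult_minus1)

definition leavitt_cong :: "(('v,'e) gen list \<Rightarrow>\<^sub>0 'r::comm_ring_1) \<Rightarrow> (('v,'e) gen list \<Rightarrow>\<^sub>0 'r) \<Rightarrow> bool"
    (infix "\<approx>" 50) where
  "x \<approx> y \<longleftrightarrow> x - y \<in> I"

lemma cong_refl [simp]: "x \<approx> x"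
  by (simp add: leavitt_cong_def lp_ideal.zero)

lemma cong_sym: "x \<approx> y \<Longrightarrow> y \<approx> x"
  unfolding leavitt_cong_def using ideal_uminus by fastforce

lemma cong_trans [trans]: "x \<approx> y \<Longrightarrow> y \<approx> z \<Longrightarrow> x \<approx> z"
  unfolding leavitt_cong_def using lp_ideal.add by fastforce

lemma cong_add: "x \<approx> x' \<Longrightarrow> y \<approx> y' \<Longrightarrow> x + y \<approx> x' + y'"
  unfolding leavitt_cong_def using lp_ideal.add by (fastforce simp: algebra_simps)

lemma cong_mult_left: "y \<approx> y' \<Longrightarrow> x * y \<approx> x * y'"
  unfolding leavitt_cong_def using ideal_mult_left by (fastforce simp: algebra_simps)

lemma cong_mult_right: "x \<approx> x' \<Longrightarrow> x * y \<approx> x' * y"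
  unfolding leavitt_cong_def using ideal_mult_right by (fastforce simp: algebra_simps)

lemma cong_mult: "x \<approx> x' \<Longrightarrow> y \<approx> y' \<Longrightarrow> x * y \<approx> x' * y'"
  using cong_mult_left cong_mult_right cong_trans by blast

lemma cong_sum: "(\<And>i. i \<in> A \<Longrightarrow> f i \<approx> g i) \<Longrightarrow> (\<Sum>i\<in>A. f i) \<approx> (\<Sum>i\<in>A. g i)"
  by (induction A rule: infinite_finite_induct) (auto intro: cong_add)

lemma pv_idem: "v \<in> E0 \<Longrightarrow> pv v * pv v \<approx> pv v"
  unfolding leavitt_cong_def fmul_eq_times[symmetric] by (rule lp_ideal.idem)

lemma pv_orth: "v \<in> E0 \<Longrightarrow> w \<in> E0 \<Longrightarrow> v \<noteq> w \<Longrightarrow> pv v * pv w \<approx> 0"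
  unfolding leavitt_cong_def fmul_eq_times[symmetric] diff_zero by (rule lp_ideal.orth)

lemma pv_times_pv: "v \<in> E0 \<Longrightarrow> w \<in> E0 \<Longrightarrow> pv v * pv w \<approx> (if v = w then pv v else 0)"
  by (simp add: pv_idem pv_orth)

lemma pv_range_se: "e \<in> E1 \<Longrightarrow> pv (r e) * se e \<approx> se e"
  unfolding leavitt_cong_def fmul_eq_times[symmetric] by (rule lp_ideal.rs)

lemma se_pv_source: "e \<in> E1 \<Longrightarrow> se e * pv (s e) \<approx> se e"
  unfolding leavitt_cong_def fmul_eq_times[symmetric] by (rule lp_ideal.sr)

lemma pv_source_ses: "e \<in> E1 \<Longrightarrow> pv (s e) * ses e \<approx> ses e"
  unfolding leavitt_cong_def fmul_eq_times[symmetric] by (rule lp_ideal.rss)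

lemma ses_pv_range: "e \<in> E1 \<Longrightarrow> ses e * pv (r e) \<approx> ses e"
  unfolding leavitt_cong_def fmul_eq_times[symmetric] by (rule lp_ideal.ssr)

lemma ses_times_se: "e \<in> E1 \<Longrightarrow> f \<in> E1 \<Longrightarrow> ses e * se f \<approx> (if e = f then pv (s e) else 0)"
  unfolding leavitt_cong_def fmul_eq_times[symmetric] by (rule lp_ideal.ck1)

lemma pv_sum_se_ses:
  assumes "v \<in> E0" "regular v"
  shows "pv v \<approx> (\<Sum>e\<in>{e\<in>E1. r e = v}. se e * ses e)"
proof -
  (* lp_ideal.ck2 states its nonemptiness premise in predicate form *)
  have "(\<lambda>e. e \<in> E1 \<and> r e = v) \<noteq> (\<lambda>x. x \<in> {})"
    using assms(2) by (auto simp: regular_def fun_eq_iff)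
  from lp_ideal.ck2[OF assms(1) this] show ?thesis
    using assms(2) by (simp add: leavitt_cong_def fmul_eq_times regular_def)
qed

lemma cong_zero_by_orth:
  assumes "x \<approx> x * pv a" "pv b * y \<approx> y" "a \<in> E0" "b \<in> E0" "a \<noteq> b"
  shows "x * y \<approx> 0"
proof -
  have "x * y \<approx> x * pv a * (pv b * y)"
    using cong_mult[OF assms(1) cong_sym[OF assms(2)]] .
  also have "\<dots> = x * (pv a * pv b) * y"
    by (simp add: mult.assoc)
  also have "\<dots> \<approx> 0"
    using cong_mult_right[OF cong_mult_left[OF pv_orth[OF assms(3-5)]]] by simp
  finally show ?thesis .
qed

section \<open>Reduction of words to monomials\<close>

lemma pv_prange_spath: "path_ok E0 E1 r s \<mu> \<Longrightarrow> pv (prange r \<mu>) * spath \<mu> \<approx> spath \<mu>"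
proof (cases \<mu>)
  case (Inr es)
  moreover assume "path_ok E0 E1 r s \<mu>"
  ultimately obtain e es' where "es = e # es'" "e \<in> E1"
    by (cases es) auto
  then show ?thesis
    unfolding Inr \<open>es = e # es'\<close> spath_Cons prange.simps list.sel
    using cong_mult_right[OF pv_range_se[of e], of "mon (map S es')"] by (simp add: mult.assoc)
qed (simp add: pv_idem)

lemma pv_psource_spath_star: "path_ok E0 E1 r s \<nu> \<Longrightarrow> pv (psource s \<nu>) * spath_star \<nu> \<approx> spath_star \<nu>"
proof (cases \<nu>)
  case (Inr es)
  moreover assume "path_ok E0 E1 r s \<nu>"
  ultimately obtain es' e where "es = es' @ [e]" "e \<in> E1"
    by (cases es rule: rev_exhaust) auto
  then show ?thesis
    unfolding Inr \<open>es = es' @ [e]\<close> spath_star_snoc psource.simps last_snoc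
    using cong_mult_right[OF pv_source_ses[of e], of "mon (rev (map SS es'))"] by (simp add: mult.assoc)
qed (simp add: pv_idem)

lemma pv_times_spath:
  assumes "v \<in> E0" "path_ok E0 E1 r s \<mu>"
  shows "pv v * spath \<mu> \<approx> (if prange r \<mu> = v then spath \<mu> else 0)"
proof -
  have "pv v * spath \<mu> \<approx> pv v * (pv (prange r \<mu>) * spath \<mu>)"
    using cong_mult_left[OF cong_sym[OF pv_prange_spath[OF assms(2)]]] .
  also have "\<dots> \<approx> (if prange r \<mu> = v then pv v else 0) * spath \<mu>"
    unfolding mult.assoc[symmetric]
    by (rule cong_mult_right) (use pv_times_pv[OF assms(1) prange_in_E0[OF assms(2)]] in auto)
  also have "\<dots> \<approx> (if prange r \<mu> = v then spath \<mu> else 0)"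
    using pv_prange_spath[OF assms(2)] by auto
  finally show ?thesis .
qed

lemma pv_times_spath_star:
  assumes "v \<in> E0" "path_ok E0 E1 r s \<nu>"
  shows "pv v * spath_star \<nu> \<approx> (if psource s \<nu> = v then spath_star \<nu> else 0)"
proof -
  have "pv v * spath_star \<nu> \<approx> pv v * (pv (psource s \<nu>) * spath_star \<nu>)"
    using cong_mult_left[OF cong_sym[OF pv_psource_spath_star[OF assms(2)]]] .
  also have "\<dots> \<approx> (if psource s \<nu> = v then pv v else 0) * spath_star \<nu>"
    unfolding mult.assoc[symmetric]
    by (rule cong_mult_right) (use pv_times_pv[OF assms(1) psource_in_E0[OF assms(2)]] in auto)
  also have "\<dots> \<approx> (if psource s \<nu> = v then spath_star \<nu> else 0)"
    using pv_psource_spath_star[OF assms(2)] by auto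
  finally show ?thesis .
qed

lemma se_times_spath:
  assumes "e \<in> E1" "path_ok E0 E1 r s \<mu>"
  shows "se e * spath \<mu> \<approx> (if prange r \<mu> = s e then spath (pcons e \<mu>) else 0)"
proof (cases "prange r \<mu> = s e")
  case False
  then show ?thesis
    using cong_zero_by_orth[OF cong_sym[OF se_pv_source[OF assms(1)]] pv_prange_spath[OF assms(2)]
        source_in_E0[OF assms(1)] prange_in_E0[OF assms(2)] not_sym[OF False]]
    by simp
next
  case True
  show ?thesis
  proof (cases \<mu>)
    case (Inl u)
    then show ?thesis
      using True se_pv_source[OF assms(1)] by (simp add: se_eq_mon)
  qed (use True in \<open>simp add: se_eq_mon flip: mon_Cons\<close>)
qed

lemma ses_times_spath_star:
  assumes "e \<in> E1" "path_ok E0 E1 r s \<nu>"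
  shows "ses e * spath_star \<nu> \<approx> (if psource s \<nu> = r e then spath_star (psnoc \<nu> e) else 0)"
proof (cases "psource s \<nu> = r e")
  case False
  then show ?thesis
    using cong_zero_by_orth[OF cong_sym[OF ses_pv_range[OF assms(1)]] pv_psource_spath_star[OF assms(2)]
        range_in_E0[OF assms(1)] psource_in_E0[OF assms(2)] not_sym[OF False]]
    by simp
next
  case True
  show ?thesis
  proof (cases \<nu>)
    case (Inl x)
    then show ?thesis
      using True ses_pv_range[OF assms(1)] by (simp add: ses_eq_mon)
  qed (use True in \<open>simp add: ses_eq_mon flip: mon_Cons\<close>)
qed

lemma ses_times_spath_Cons:
  assumes "e \<in> E1" "path_ok E0 E1 r s (Inr (f # fs))"
  shows "ses e * spath (Inr (f # fs))
    \<approx> (if e = f then spath (if fs = [] then Inl (s f) else Inr fs) else 0)"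
proof -
  have f: "f \<in> E1"
    using assms(2) by simp
  have "ses e * spath (Inr (f # fs)) = ses e * se f * mon (map S fs)"
    by (simp only: spath_Cons mult.assoc)
  also have "\<dots> \<approx> (if e = f then pv (s f) * mon (map S fs) else 0)"
    using cong_mult_right[OF ses_times_se[OF assms(1) f]] by auto
  also have "\<dots> \<approx> (if e = f then spath (if fs = [] then Inl (s f) else Inr fs) else 0)"
  proof (cases "fs = []")
    case False
    then obtain g gs where "fs = g # gs"
      by (cases fs) auto
    then have "path_ok E0 E1 r s (Inr fs)" "prange r (Inr fs) = s f"
      using assms(2) path_ok_Cons_Cons by auto
    then show ?thesis
      using pv_prange_spath[of "Inr fs"] False by auto
  qed simp
  finally show ?thesis .
qed

lemma pv_times_path_monomial:
  assumes "v \<in> E0" "path_ok E0 E1 r s \<mu>"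
  shows "pv v * path_monomial \<mu> \<nu> \<approx> (if prange r \<mu> = v then path_monomial \<mu> \<nu> else 0)"
  using cong_mult_right[OF pv_times_spath[OF assms], of "spath_star \<nu>"]
  by (cases "prange r \<mu> = v") (simp_all add: path_monomial_def mult.assoc)

lemma se_times_path_monomial:
  assumes "e \<in> E1" "path_ok E0 E1 r s \<mu>"
  shows "se e * path_monomial \<mu> \<nu> \<approx> (if prange r \<mu> = s e then path_monomial (pcons e \<mu>) \<nu> else 0)"
  using cong_mult_right[OF se_times_spath[OF assms], of "spath_star \<nu>"]
  by (cases "prange r \<mu> = s e") (simp_all add: path_monomial_def mult.assoc)

lemma ses_times_path_monomial_Inl:
  assumes "e \<in> E1" "u \<in> E0" "path_ok E0 E1 r s \<nu>"
  shows "ses e * path_monomial (Inl u) \<nu>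
    \<approx> (if psource s \<nu> = u \<and> u = r e then path_monomial (Inl (s e)) (psnoc \<nu> e) else 0)"
proof -
  have "ses e * path_monomial (Inl u) \<nu> = ses e * (pv u * spath_star \<nu>)"
    by (simp add: path_monomial_def)
  also have "\<dots> \<approx> (if psource s \<nu> = u then ses e * spath_star \<nu> else 0)"
    using cong_mult_left[OF pv_times_spath_star[OF assms(2,3)], of "ses e"]
    by (cases "psource s \<nu> = u") simp_all
  also have "\<dots> \<approx> (if psource s \<nu> = u \<and> u = r e then spath_star (psnoc \<nu> e) else 0)"
    using ses_times_spath_star[OF assms(1,3)] by auto
  also have "\<dots> \<approx> (if psource s \<nu> = u \<and> u = r e then path_monomial (Inl (s e)) (psnoc \<nu> e) else 0)"
    using pv_psource_spath_star[OF path_ok_psnoc[OF assms(1,3)]]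
    by (auto simp: path_monomial_def intro: cong_sym)
  finally show ?thesis .
qed

lemma ses_times_path_monomial_Cons:
  assumes "e \<in> E1" "path_ok E0 E1 r s (Inr (f # fs))"
  shows "ses e * path_monomial (Inr (f # fs)) \<nu>
    \<approx> (if e = f then path_monomial (if fs = [] then Inl (s f) else Inr fs) \<nu> else 0)"
  using cong_mult_right[OF ses_times_spath_Cons[OF assms], of "spath_star \<nu>"]
  by (cases "e = f") (simp_all add: path_monomial_def mult.assoc)

definition reduces_to_monomial :: "'v \<Rightarrow> (('v,'e) gen list \<Rightarrow>\<^sub>0 'r::comm_ring_1) \<Rightarrow> bool" where
  "reduces_to_monomial \<rho> x \<longleftrightarrow> x \<approx> 0 \<or>
     (\<exists>\<mu> \<nu>. path_ok E0 E1 r s \<mu> \<and> path_ok E0 E1 r s \<nu> \<and> prange r \<nu> = \<rho> \<and> x \<approx> path_monomial \<mu> \<nu>)"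

lemma reduces_to_monomial_cong:
  "x \<approx> y \<Longrightarrow> reduces_to_monomial \<rho> y \<Longrightarrow> reduces_to_monomial \<rho> x"
  unfolding reduces_to_monomial_def using cong_trans by blast

lemma reduces_to_monomialI:
  "path_ok E0 E1 r s \<mu> \<Longrightarrow> path_ok E0 E1 r s \<nu> \<Longrightarrow> x \<approx> path_monomial \<mu> \<nu> \<Longrightarrow>
    reduces_to_monomial (prange r \<nu>) x"
  unfolding reduces_to_monomial_def by blast

lemma reduces_to_monomial_if:
  assumes "x \<approx> (if c then path_monomial \<mu> \<nu> else 0)"
    and "c \<Longrightarrow> path_ok E0 E1 r s \<mu> \<and> path_ok E0 E1 r s \<nu> \<and> prange r \<nu> = \<rho>"
  shows "reduces_to_monomial \<rho> x"
  using assms unfolding reduces_to_monomial_def by (cases c) auto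

lemma ses_times_path_monomial:
  assumes e: "e \<in> E1" and \<mu>: "path_ok E0 E1 r s \<mu>" and \<nu>: "path_ok E0 E1 r s \<nu>"
  shows "reduces_to_monomial (prange r \<nu>) (ses e * path_monomial \<mu> \<nu>)"
proof (cases \<mu>)
  case (Inl u)
  then have "ses e * path_monomial \<mu> \<nu>
      \<approx> (if psource s \<nu> = u \<and> u = r e then path_monomial (Inl (s e)) (psnoc \<nu> e) else 0)"
    using ses_times_path_monomial_Inl[OF e _ \<nu>, of u] \<mu> by simp
  then show ?thesis
    by (rule reduces_to_monomial_if)
      (use prange_psnoc[OF \<nu>] path_ok_psnoc[OF e \<nu>] source_in_E0[OF e] in auto)
next
  case (Inr es)
  with \<mu> obtain f fs where es: "es = f # fs"
    by (cases es) auto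
  have "path_ok E0 E1 r s (if fs = [] then Inl (s f) else Inr fs)"
    using \<mu> Inr es by (cases fs) (auto simp: path_ok_Cons_Cons source_in_E0)
  moreover have "ses e * path_monomial \<mu> \<nu>
      \<approx> (if e = f then path_monomial (if fs = [] then Inl (s f) else Inr fs) \<nu> else 0)"
    using ses_times_path_monomial_Cons[OF e, of f fs \<nu>] \<mu> Inr es by simp
  then show ?thesis
    by (rule reduces_to_monomial_if) (use calculation \<nu> in simp)
qed

lemma gen_times_path_monomial:
  assumes g: "gen_ok E0 E1 g" and \<mu>: "path_ok E0 E1 r s \<mu>" and \<nu>: "path_ok E0 E1 r s \<nu>"
  shows "reduces_to_monomial (prange r \<nu>) (mon [g] * path_monomial \<mu> \<nu>)"
proof (cases g)
  case (P v)
  then have "v \<in> E0"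
    using g by (simp add: gen_ok_def)
  then have "mon [g] * path_monomial \<mu> \<nu> \<approx> (if prange r \<mu> = v then path_monomial \<mu> \<nu> else 0)"
    using pv_times_path_monomial[OF _ \<mu>, of v \<nu>] by (simp add: P pv_eq_mon)
  then show ?thesis
    by (rule reduces_to_monomial_if) (simp add: \<mu> \<nu>)
next
  case (S e)
  then have e: "e \<in> E1"
    using g by (simp add: gen_ok_def)
  then have "mon [g] * path_monomial \<mu> \<nu> \<approx> (if prange r \<mu> = s e then path_monomial (pcons e \<mu>) \<nu> else 0)"
    using se_times_path_monomial[OF e \<mu>, of \<nu>] by (simp add: S se_eq_mon)
  then show ?thesis
    by (rule reduces_to_monomial_if) (simp add: path_ok_pcons[OF e \<mu>] \<nu>)
next
  case (SS e)
  then show ?thesis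
    using ses_times_path_monomial[OF _ \<mu> \<nu>] g by (simp add: gen_ok_def ses_eq_mon)
qed

lemma reduces_to_monomial_gen_times:
  assumes "gen_ok E0 E1 g" "reduces_to_monomial \<rho> x"
  shows "reduces_to_monomial \<rho> (mon [g] * x)"
  using assms(2) unfolding reduces_to_monomial_def[of \<rho> x]
proof
  assume "x \<approx> 0"
  then show ?thesis
    using cong_mult_left[of x 0 "mon [g]"] by (simp add: reduces_to_monomial_def)
next
  assume "\<exists>\<mu> \<nu>. path_ok E0 E1 r s \<mu> \<and> path_ok E0 E1 r s \<nu> \<and> prange r \<nu> = \<rho> \<and> x \<approx> path_monomial \<mu> \<nu>"
  then obtain \<mu> \<nu> where "path_ok E0 E1 r s \<mu>" "path_ok E0 E1 r s \<nu>" "prange r \<nu> = \<rho>"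
    and "x \<approx> path_monomial \<mu> \<nu>"
    by blast
  then show ?thesis
    using reduces_to_monomial_cong[OF cong_mult_left] gen_times_path_monomial[OF assms(1)] by metis
qed

lemma reduces_to_monomial_word_times:
  "word_ok w \<Longrightarrow> reduces_to_monomial \<rho> x \<Longrightarrow> reduces_to_monomial \<rho> (mon w * x)"
proof (induction w)
  case (Cons g w)
  then show ?case
    using reduces_to_monomial_gen_times[of g \<rho> "mon w * x"] by (simp add: mon_Cons[of g w] mult.assoc)
qed simp

lemma gen_reduces_to_monomial:
  assumes "gen_ok E0 E1 g"
  shows "\<exists>\<rho>. reduces_to_monomial \<rho> (mon [g])"
proof (cases g)
  case (P v)
  then have "reduces_to_monomial (prange r (Inl v)) (mon [g])"
    using assms pv_idem[of v]
    by (intro reduces_to_monomialI[of "Inl v"]) (auto simp: gen_ok_def path_monomial_def pv_eq_mon intro: cong_sym)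
  then show ?thesis ..
next
  case (S e)
  then have "reduces_to_monomial (prange r (Inl (s e))) (mon [g])"
    using assms se_pv_source[of e] source_in_E0[of e]
    by (intro reduces_to_monomialI[of "Inr [e]"]) (auto simp: gen_ok_def path_monomial_def se_eq_mon intro: cong_sym)
  then show ?thesis ..
next
  case (SS e)
  then have "reduces_to_monomial (prange r (Inr [e])) (mon [g])"
    using assms pv_source_ses[of e] source_in_E0[of e]
    by (intro reduces_to_monomialI[of "Inl (s e)"]) (auto simp: gen_ok_def path_monomial_def ses_eq_mon intro: cong_sym)
  then show ?thesis ..
qed

lemma word_reduces_to_monomial:
  "w \<noteq> [] \<Longrightarrow> word_ok w \<Longrightarrow> \<exists>\<rho>. reduces_to_monomial \<rho> (mon w)"
proof (induction w)
  case (Cons g w)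
  then show ?case
    using gen_reduces_to_monomial[of g] reduces_to_monomial_gen_times[of g]
    by (cases "w = []") (auto simp: mon_Cons[of g w])
qed simp

section \<open>Sufficiency\<close>

lemma path_monomial_in_Mspace:
  "path_ok E0 E1 r s \<mu> \<Longrightarrow> path_ok E0 E1 r s \<nu> \<Longrightarrow> prange r \<mu> \<in> V \<Longrightarrow>
    path_monomial \<mu> \<nu> \<in> Mspace E0 E1 r s V"
  unfolding Mspace_def path_monomial_def fmul_eq_times[symmetric] by (rule rspan.base) blast

lemma path_monomial_in_Mstar_space:
  "path_ok E0 E1 r s \<mu> \<Longrightarrow> path_ok E0 E1 r s \<nu> \<Longrightarrow> prange r \<nu> \<in> V \<Longrightarrow>
    path_monomial \<mu> \<nu> \<in> Mstar_space E0 E1 r s V"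
  unfolding Mstar_space_def path_monomial_def fmul_eq_times[symmetric] by (rule rspan.base) blast

lemma pv_cong_path_monomial: "v \<in> E0 \<Longrightarrow> pv v \<approx> path_monomial (Inl v) (Inl v)"
  by (simp add: path_monomial_def pv_idem cong_sym)

lemma word_times_pv_in_Mstar_space:
  assumes "u \<in> V" "V \<subseteq> E0" "word_ok a"
  shows "\<exists>n\<in>Mstar_space E0 E1 r s V. mon a * pv u \<approx> (n :: _ \<Rightarrow>\<^sub>0 'r::comm_ring_1)"
proof -
  have "u \<in> E0"
    using assms(1,2) by blast
  then have "reduces_to_monomial u (pv u :: _ \<Rightarrow>\<^sub>0 'r)"
    using reduces_to_monomialI[of "Inl u" "Inl u" "pv u"] pv_cong_path_monomial[of u] by simp
  then have "reduces_to_monomial u (mon a * pv u :: _ \<Rightarrow>\<^sub>0 'r)"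
    by (rule reduces_to_monomial_word_times[OF assms(3)])
  then consider "(mon a * pv u :: _ \<Rightarrow>\<^sub>0 'r) \<approx> 0"
    | \<mu> \<nu> where "path_ok E0 E1 r s \<mu>" "path_ok E0 E1 r s \<nu>" "prange r \<nu> = u"
      "(mon a * pv u :: _ \<Rightarrow>\<^sub>0 'r) \<approx> path_monomial \<mu> \<nu>"
    unfolding reduces_to_monomial_def by blast
  then show ?thesis
  proof cases
    case 1
    then show ?thesis
      using rspan.zero unfolding Mstar_space_def by blast
  next
    case 2
    then show ?thesis
      using path_monomial_in_Mstar_space[OF 2(1,2)] assms(1) by auto
  qed
qed

lemma pv_times_word_in_Mspace:
  assumes "u \<in> V" "V \<subseteq> E0" "word_ok b"
  shows "\<exists>m\<in>Mspace E0 E1 r s V. pv u * mon b \<approx> (m :: _ \<Rightarrow>\<^sub>0 'r::comm_ring_1)"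
proof (cases "b = []")
  case True
  then show ?thesis
    using pv_cong_path_monomial path_monomial_in_Mspace[of "Inl u" "Inl u" V] assms(1,2) by auto
next
  case False
  then obtain \<rho> where "reduces_to_monomial \<rho> (mon b :: _ \<Rightarrow>\<^sub>0 'r)"
    using word_reduces_to_monomial assms(3) by blast
  then consider "(mon b :: _ \<Rightarrow>\<^sub>0 'r) \<approx> 0"
    | \<mu> \<nu> where "path_ok E0 E1 r s \<mu>" "path_ok E0 E1 r s \<nu>" "(mon b :: _ \<Rightarrow>\<^sub>0 'r) \<approx> path_monomial \<mu> \<nu>"
    unfolding reduces_to_monomial_def by blast
  then show ?thesis
  proof cases
    case 1
    then show ?thesis
      using cong_mult_left[of "mon b" 0 "pv u"] rspan.zero unfolding Mspace_def by auto
  next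
    case 2
    have "pv u * mon b \<approx> (pv u * path_monomial \<mu> \<nu> :: _ \<Rightarrow>\<^sub>0 'r)"
      using cong_mult_left[OF 2(3)] .
    also have "\<dots> \<approx> (if prange r \<mu> = u then path_monomial \<mu> \<nu> else 0)"
      using pv_times_path_monomial[OF _ 2(1)] assms(1,2) by blast
    finally show ?thesis
      using path_monomial_in_Mspace[OF 2(1,2)] assms(1) rspan.zero unfolding Mspace_def
      by (cases "prange r \<mu> = u") auto
  qed
qed

definition in_MstarM_mod :: "'v set \<Rightarrow> (('v,'e) gen list \<Rightarrow>\<^sub>0 'r::comm_ring_1) \<Rightarrow> bool" where
  "in_MstarM_mod V x \<longleftrightarrow> (\<exists>y\<in>MstarM E0 E1 r s V. x \<approx> y)"

lemma in_MstarM_mod_cong: "x \<approx> x' \<Longrightarrow> in_MstarM_mod V x' \<Longrightarrow> in_MstarM_mod V x"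
  unfolding in_MstarM_mod_def using cong_trans by blast

lemma in_MstarM_mod_zero: "in_MstarM_mod V 0"
  unfolding in_MstarM_mod_def MstarM_def by (auto intro: bexI[OF _ rspan.zero])

lemma in_MstarM_mod_add: "in_MstarM_mod V x \<Longrightarrow> in_MstarM_mod V y \<Longrightarrow> in_MstarM_mod V (x + y)"
  unfolding in_MstarM_mod_def MstarM_def by (blast intro: rspan.add cong_add)

lemma in_MstarM_mod_sum:
  "(\<And>i. i \<in> A \<Longrightarrow> in_MstarM_mod V (f i)) \<Longrightarrow> in_MstarM_mod V (\<Sum>i\<in>A. f i)"
  by (induction A rule: infinite_finite_induct) (simp_all add: in_MstarM_mod_zero in_MstarM_mod_add)

lemma in_MstarM_mod_scalar: "in_MstarM_mod V x \<Longrightarrow> in_MstarM_mod V (Poly_Mapping.single [] c * x)"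
  unfolding in_MstarM_mod_def MstarM_def
  by (blast intro: rspan.smult[of _ _ c, unfolded fsmult_eq_times] cong_mult_left)

lemma in_MstarM_mod_word_pv_word:
  assumes "u \<in> V" "V \<subseteq> E0" "word_ok a" "word_ok b"
  shows "in_MstarM_mod V (mon a * pv u * mon b :: _ \<Rightarrow>\<^sub>0 'r::comm_ring_1)"
proof -
  obtain n m :: "_ \<Rightarrow>\<^sub>0 'r" where nm: "n \<in> Mstar_space E0 E1 r s V" "m \<in> Mspace E0 E1 r s V"
    and "mon a * pv u \<approx> n" "pv u * mon b \<approx> m"
    using word_times_pv_in_Mstar_space[OF assms(1-3)] pv_times_word_in_Mspace[OF assms(1,2,4)] by blast
  have "mon a * pv u * mon b \<approx> (mon a * (pv u * pv u) * mon b :: _ \<Rightarrow>\<^sub>0 'r)"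
    using cong_mult_right[OF cong_mult_left[OF cong_sym[OF pv_idem]]] assms(1,2) by blast
  also have "\<dots> = (mon a * pv u) * (pv u * mon b)"
    by (simp add: mult.assoc)
  also have "\<dots> \<approx> n * m"
    using cong_mult \<open>mon a * pv u \<approx> n\<close> \<open>pv u * mon b \<approx> m\<close> by blast
  finally show ?thesis
    unfolding in_MstarM_mod_def MstarM_def fmul_eq_times[symmetric] using nm by (blast intro: rspan.base)
qed

definition ideal_in_MstarM_mod :: "'v set \<Rightarrow> (('v,'e) gen list \<Rightarrow>\<^sub>0 'r::comm_ring_1) \<Rightarrow> bool" where
  "ideal_in_MstarM_mod V x \<longleftrightarrow> (\<forall>a b. word_ok a \<longrightarrow> word_ok b \<longrightarrow> in_MstarM_mod V (mon a * x * mon b))"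

lemma ideal_in_MstarM_modD: "ideal_in_MstarM_mod V x \<Longrightarrow> in_MstarM_mod V x"
  unfolding ideal_in_MstarM_mod_def by (metis empty_iff list.set(1) mon_Nil mult_1 mult_1_right)

lemma ideal_in_MstarM_mod_cong:
  "x \<approx> y \<Longrightarrow> ideal_in_MstarM_mod V y \<Longrightarrow> ideal_in_MstarM_mod V x"
  unfolding ideal_in_MstarM_mod_def by (meson cong_mult_left cong_mult_right in_MstarM_mod_cong)

lemma ideal_in_MstarM_mod_sandwich:
  assumes "word_ok a" "word_ok b" "ideal_in_MstarM_mod V x"
  shows "ideal_in_MstarM_mod V (mon a * x * mon b)"
  unfolding ideal_in_MstarM_mod_def
proof (intro allI impI)
  fix a' b'
  assume "word_ok a'" "word_ok b'"
  then have "in_MstarM_mod V (mon (a' @ a) * x * mon (b @ b'))"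
    using assms(1,2) assms(3)[unfolded ideal_in_MstarM_mod_def, rule_format, of "a' @ a" "b @ b'"]
    by auto
  then show "in_MstarM_mod V (mon a' * (mon a * x * mon b) * mon b')"
    by (simp add: mon_append mult.assoc)
qed

lemma ideal_in_MstarM_mod_sum:
  "(\<And>i. i \<in> A \<Longrightarrow> ideal_in_MstarM_mod V (f i)) \<Longrightarrow> ideal_in_MstarM_mod V (\<Sum>i\<in>A. f i)"
  unfolding ideal_in_MstarM_mod_def by (simp add: sum_distrib_left sum_distrib_right in_MstarM_mod_sum)

lemma ideal_in_MstarM_mod_pv: "V \<subseteq> E0 \<Longrightarrow> u \<in> V \<Longrightarrow> ideal_in_MstarM_mod V (pv u)"
  unfolding ideal_in_MstarM_mod_def by (simp add: in_MstarM_mod_word_pv_word)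

lemma pv_source_cong:
  assumes "e \<in> E1"
  shows "pv (s e) \<approx> ses e * pv (r e) * se e"
proof -
  have "pv (s e) \<approx> ses e * se e"
    using cong_sym[OF ses_times_se[OF assms assms]] by simp
  also have "\<dots> \<approx> ses e * (pv (r e) * se e)"
    using cong_mult_left[OF cong_sym[OF pv_range_se[OF assms]]] .
  finally show ?thesis
    by (simp add: mult.assoc)
qed

lemma pv_regular_cong:
  assumes "v \<in> E0" "regular v"
  shows "pv v \<approx> (\<Sum>e\<in>{e\<in>E1. r e = v}. se e * pv (s e) * ses e)"
  using cong_trans[OF pv_sum_se_ses[OF assms] cong_sum[OF cong_mult_right[OF cong_sym[OF se_pv_source]]]]
  by simp

lemma ideal_in_MstarM_mod_pv_source:
  assumes "e \<in> E1" "ideal_in_MstarM_mod V (pv (r e) :: _ \<Rightarrow>\<^sub>0 'r::comm_ring_1)"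
  shows "ideal_in_MstarM_mod V (pv (s e) :: _ \<Rightarrow>\<^sub>0 'r)"
proof -
  have "ideal_in_MstarM_mod V (mon [SS e] * pv (r e) * mon [S e] :: _ \<Rightarrow>\<^sub>0 'r)"
    using ideal_in_MstarM_mod_sandwich[of "[SS e]" "[S e]"] assms by (simp add: gen_ok_def)
  then show ?thesis
    using ideal_in_MstarM_mod_cong[OF pv_source_cong[OF assms(1)]] by (simp add: ses_eq_mon se_eq_mon)
qed

lemma ideal_in_MstarM_mod_pv_regular:
  assumes "v \<in> E0" "regular v"
    and "\<And>e. e \<in> E1 \<Longrightarrow> r e = v \<Longrightarrow> ideal_in_MstarM_mod V (pv (s e) :: _ \<Rightarrow>\<^sub>0 'r::comm_ring_1)"
  shows "ideal_in_MstarM_mod V (pv v :: _ \<Rightarrow>\<^sub>0 'r)"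
proof -
  have "ideal_in_MstarM_mod V (mon [S e] * pv (s e) * mon [SS e] :: _ \<Rightarrow>\<^sub>0 'r)"
    if "e \<in> {e\<in>E1. r e = v}" for e
    using ideal_in_MstarM_mod_sandwich[of "[S e]" "[SS e]"] that assms(3) by (auto simp: gen_ok_def)
  then have "ideal_in_MstarM_mod V (\<Sum>e\<in>{e\<in>E1. r e = v}. se e * pv (s e) * ses e :: _ \<Rightarrow>\<^sub>0 'r)"
    by (intro ideal_in_MstarM_mod_sum) (simp add: ses_eq_mon se_eq_mon)
  then show ?thesis
    by (rule ideal_in_MstarM_mod_cong[OF pv_regular_cong[OF assms(1,2)]])
qed

lemma SigmaH_subset_ideal_in_MstarM_mod:
  assumes "V \<subseteq> E0"
  shows "SigmaH E0 E1 r s V \<subseteq> {v \<in> E0. ideal_in_MstarM_mod V (pv v :: _ \<Rightarrow>\<^sub>0 'r::comm_ring_1)}"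
proof (rule SigmaH_least)
  show "hereditary E0 E1 r s {v \<in> E0. ideal_in_MstarM_mod V (pv v :: _ \<Rightarrow>\<^sub>0 'r)}"
    by (intro hereditaryI_edges) (simp add: source_in_E0 ideal_in_MstarM_mod_pv_source)
  show "saturated E0 E1 r s {v \<in> E0. ideal_in_MstarM_mod V (pv v :: _ \<Rightarrow>\<^sub>0 'r)}"
    unfolding saturated_def using ideal_in_MstarM_mod_pv_regular by (auto simp: regular_def)
qed (use assms ideal_in_MstarM_mod_pv in auto)

lemma gen_factors_through_vertex:
  assumes "gen_ok E0 E1 g"
  obtains a v b where "word_ok a" "v \<in> E0" "word_ok b" "mon [g] \<approx> mon a * pv v * mon b"
proof (cases g)
  case (P v)
  then show ?thesis
    using that[of "[]" v "[]"] assms by (simp add: gen_ok_def pv_eq_mon)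
next
  case (S e)
  then show ?thesis
    using that[of "[]" "r e" "[S e]"] assms cong_sym[OF pv_range_se[of e]] range_in_E0[of e]
    by (simp add: gen_ok_def se_eq_mon)
next
  case (SS e)
  then show ?thesis
    using that[of "[SS e]" "r e" "[]"] assms cong_sym[OF ses_pv_range[of e]] range_in_E0[of e]
    by (simp add: gen_ok_def ses_eq_mon)
qed

lemma word_in_MstarM_mod:
  assumes "\<forall>v\<in>E0. ideal_in_MstarM_mod V (pv v :: _ \<Rightarrow>\<^sub>0 'r::comm_ring_1)"
    and "w \<noteq> []" "word_ok w"
  shows "in_MstarM_mod V (mon w :: _ \<Rightarrow>\<^sub>0 'r)"
proof -
  obtain g w' where w: "w = g # w'"
    using assms(2) by (cases w) auto
  then obtain a v b where ab: "word_ok a" "v \<in> E0" "word_ok b"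
    and g: "mon [g] \<approx> (mon a * pv v * mon b :: _ \<Rightarrow>\<^sub>0 'r)"
    using gen_factors_through_vertex assms(3) by (metis list.set_intros(1))
  have "(mon w :: _ \<Rightarrow>\<^sub>0 'r) \<approx> mon a * pv v * mon (b @ w')"
    using cong_mult_right[OF g, of "mon w'"] by (simp add: w mon_Cons[of g w'] mon_append mult.assoc)
  moreover have "ideal_in_MstarM_mod V (mon a * pv v * mon (b @ w') :: _ \<Rightarrow>\<^sub>0 'r)"
    using ideal_in_MstarM_mod_sandwich[OF ab(1) _ assms(1)[rule_format, OF ab(2)], of "b @ w'"]
      ab(3) assms(3) w
    by auto
  ultimately show ?thesis
    using in_MstarM_mod_cong ideal_in_MstarM_modD by blast
qed

lemma is_full_if_SigmaH_eq:
  assumes "V \<subseteq> E0" "SigmaH E0 E1 r s V = E0"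
  shows "is_full TYPE('r::comm_ring_1) E0 E1 r s V"
  unfolding is_full_def
proof
  fix x :: "_ \<Rightarrow>\<^sub>0 'r"
  assume x: "x \<in> free_alg E0 E1"
  have E0: "\<forall>v\<in>E0. ideal_in_MstarM_mod V (pv v :: _ \<Rightarrow>\<^sub>0 'r)"
    using SigmaH_subset_ideal_in_MstarM_mod[OF assms(1)] assms(2) by blast
  have "in_MstarM_mod V (Poly_Mapping.single [] (Poly_Mapping.lookup x w) * mon w)"
    if "w \<in> Poly_Mapping.keys x" for w
  proof -
    have "w \<noteq> []" "word_ok w"
      using x that unfolding free_alg_def by auto
    then show ?thesis
      by (intro in_MstarM_mod_scalar word_in_MstarM_mod[OF E0])
  qed
  then have "in_MstarM_mod V (\<Sum>w\<in>Poly_Mapping.keys x. Poly_Mapping.single w (Poly_Mapping.lookup x w))"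
    by (intro in_MstarM_mod_sum) (simp add: single_Nil_times_mon)
  then show "\<exists>y\<in>MstarM E0 E1 r s V. x - y \<in> I"
    unfolding sum_single_lookup in_MstarM_mod_def leavitt_cong_def .
qed

section \<open>Necessity\<close>

definition shift :: "('v,'e) point \<Rightarrow> ('v,'e) point" where
  "shift \<xi> = ((case snd \<xi> 0 of None \<Rightarrow> fst \<xi> | Some e \<Rightarrow> s e), \<lambda>i. snd \<xi> (Suc i))"

definition locally_admissible :: "'v set \<Rightarrow> ('v,'e) point \<Rightarrow> bool" where
  "locally_admissible H \<xi> \<longleftrightarrow> fst \<xi> \<in> E0 \<and> fst \<xi> \<notin> H \<and>
     (case snd \<xi> 0 of
        None \<Rightarrow> \<not> regular (fst \<xi>) \<and> (\<forall>i. snd \<xi> i = None)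
      | Some e \<Rightarrow> e \<in> E1 \<and> r e = fst \<xi> \<and> s e \<notin> H)"

(* The admissible points are the paths that avoid H and are infinite or stop at a vertex
   that is not regular. *)
definition admissible :: "'v set \<Rightarrow> ('v,'e) point \<Rightarrow> bool" where
  "admissible H \<xi> \<longleftrightarrow> (\<forall>n. locally_admissible H ((shift ^^ n) \<xi>))"

definition vanishes_on_admissible :: "'v set \<Rightarrow> (('v,'e) gen list \<Rightarrow>\<^sub>0 'r::comm_ring_1) \<Rightarrow> bool" where
  "vanishes_on_admissible H p \<longleftrightarrow> (\<forall>F \<xi>. admissible H \<xi> \<longrightarrow> rep E1 r s p F \<xi> = 0)"

lemma admissible_locally_admissible: "admissible H \<xi> \<Longrightarrow> locally_admissible H \<xi>"
  unfolding admissible_def by (metis funpow_0)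

lemma admissible_shift: "admissible H \<xi> \<Longrightarrow> admissible H (shift \<xi>)"
  unfolding admissible_def by (metis comp_apply funpow_Suc_right)

lemma rep_se_ses:
  assumes "locally_admissible H \<xi>" "e \<in> E1"
  shows "rep E1 r s (fmul (se e) (ses e)) F \<xi> = (if snd \<xi> 0 = Some e then F \<xi> else 0)"
proof -
  have "snd \<xi> 0 = Some e \<Longrightarrow> case_nat (Some e) (\<lambda>i. snd \<xi> (Suc i)) = snd \<xi>"
    by (auto simp: fun_eq_iff split: nat.split)
  moreover have "snd \<xi> 0 = Some e \<Longrightarrow> r e = fst \<xi>"
    using assms(1) by (auto simp: locally_admissible_def)
  ultimately show ?thesis
    using assms(2) by (auto simp: se_eq_mon ses_eq_mon fmul_mon rep_mon word_op_def gen_act_def)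
qed

lemma rep_sum_se_ses:
  assumes "locally_admissible H \<xi>" "regular v"
  shows "(\<Sum>e\<in>{e\<in>E1. r e = v}. rep E1 r s (fmul (se e) (ses e)) F \<xi>) = (if fst \<xi> = v then F \<xi> else 0)"
proof (cases "snd \<xi> 0")
  case None
  then have "fst \<xi> \<noteq> v"
    using assms by (auto simp: locally_admissible_def)
  then show ?thesis
    using None rep_se_ses[OF assms(1)] by (auto intro!: sum.neutral)
next
  case (Some e0)
  then have "e0 \<in> E1" "r e0 = fst \<xi>"
    using assms(1) by (auto simp: locally_admissible_def)
  moreover have "(\<Sum>e\<in>{e\<in>E1. r e = v}. rep E1 r s (fmul (se e) (ses e)) F \<xi>)
      = (\<Sum>e\<in>{e\<in>E1. r e = v}. if e0 = e then F \<xi> else 0)"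
  proof (rule sum.cong)
    fix e
    assume "e \<in> {e\<in>E1. r e = v}"
    then show "rep E1 r s (fmul (se e) (ses e)) F \<xi> = (if e0 = e then F \<xi> else 0)"
      using rep_se_ses[OF assms(1), of e F] Some by auto
  qed simp
  ultimately show ?thesis
    using assms(2) by (simp add: sum.delta regular_def)
qed

context
  fixes H :: "'v set"
  assumes H_hereditary: "hereditary E0 E1 r s H"
    and H_saturated: "saturated E0 E1 r s H"
begin

lemma range_notin_H: "e \<in> E1 \<Longrightarrow> s e \<notin> H \<Longrightarrow> r e \<notin> H"
  using hereditary_edge[OF H_hereditary] by blast

lemma edge_leaving_H_choice:
  obtains pick where
    "\<And>u. u \<in> E0 \<Longrightarrow> regular u \<Longrightarrow> u \<notin> H \<Longrightarrow> pick u \<in> E1 \<and> r (pick u) = u \<and> s (pick u) \<notin> H"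
proof -
  have "\<forall>u. \<exists>e. u \<in> E0 \<longrightarrow> regular u \<longrightarrow> u \<notin> H \<longrightarrow> e \<in> E1 \<and> r e = u \<and> s e \<notin> H"
    using H_saturated unfolding saturated_def regular_def by blast
  then show ?thesis
    using that by metis
qed

lemma admissible_gen_act:
  assumes "admissible H \<xi>" "gen_act E1 r s g \<xi> = Some \<eta>"
  shows "admissible H \<eta>"
proof (cases g)
  case (P v)
  then show ?thesis
    using assms by (auto simp: gen_act_def split: if_splits)
next
  case (S e)
  then have "\<eta> = shift \<xi>"
    using assms(2) by (auto simp: gen_act_def shift_def split: if_splits)
  then show ?thesis
    using admissible_shift assms(1) by blast
next
  case (SS e)
  then have e: "e \<in> E1" "fst \<xi> = s e" and \<eta>: "\<eta> = (r e, case_nat (Some e) (snd \<xi>))"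
    using assms(2) by (auto simp: gen_act_def split: if_splits)
  have "locally_admissible H \<eta>"
    using e \<eta> admissible_locally_admissible[OF assms(1)] range_in_E0 range_notin_H
    by (auto simp: locally_admissible_def)
  moreover have "shift \<eta> = \<xi>"
    using e \<eta> by (auto simp: shift_def prod_eq_iff)
  ultimately have "locally_admissible H ((shift ^^ n) \<eta>)" for n
    using assms(1) by (cases n) (simp_all add: admissible_def funpow_swap1)
  then show ?thesis
    unfolding admissible_def ..
qed

lemma admissible_word_act:
  "admissible H \<xi> \<Longrightarrow> word_act E1 r s w \<xi> = Some \<eta> \<Longrightarrow> admissible H \<eta>"
proof (induction w arbitrary: \<xi>)
  case (Cons g w)
  then obtain \<zeta> where "gen_act E1 r s g \<xi> = Some \<zeta>" "word_act E1 r s w \<zeta> = Some \<eta>"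
    by (auto simp: bind_eq_Some_conv)
  then show ?case
    using Cons admissible_gen_act by blast
qed simp

lemma vanishes_on_admissible_times_left:
  assumes "vanishes_on_admissible H a"
  shows "vanishes_on_admissible H (x * a)"
proof -
  have "word_op E1 r s w (rep E1 r s a F) \<xi> = 0" if "admissible H \<xi>" for w F \<xi>
    using assms that admissible_word_act[OF that, of w]
    by (auto simp: vanishes_on_admissible_def word_op_def split: option.split)
  then show ?thesis
    unfolding vanishes_on_admissible_def rep_times by (simp add: rep_def[of _ _ _ x])
qed

lemma vanishes_on_admissible_times_right:
  "vanishes_on_admissible H a \<Longrightarrow> vanishes_on_admissible H (a * x)"
  by (simp add: vanishes_on_admissible_def rep_times)

lemma vanishes_on_admissible_add:
  "vanishes_on_admissible H a \<Longrightarrow> vanishes_on_admissible H b \<Longrightarrow> vanishes_on_admissible H (a + b)"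
  by (simp add: vanishes_on_admissible_def rep_add)

lemma vanishes_on_admissible_zero: "vanishes_on_admissible H 0"
  by (simp add: vanishes_on_admissible_def)

lemma vanishes_on_admissible_ideal: "a \<in> I \<Longrightarrow> vanishes_on_admissible H a"
proof (induction rule: lp_ideal.induct)
  case (ck2 v)
  then have "regular v"
    by (auto simp: regular_def fun_eq_iff)
  have "rep E1 r s (pv v - (\<Sum>e\<in>{e\<in>E1. r e = v}. fmul (se e) (ses e))) F \<xi> = 0"
    if "admissible H \<xi>" for F \<xi>
    using rep_sum_se_ses[OF admissible_locally_admissible[OF that] \<open>regular v\<close>, of F]
    by (simp add: rep_diff rep_sum pv_eq_mon rep_mon word_op_def gen_act_def)
  then show ?case
    unfolding vanishes_on_admissible_def by blast
next
  case (rs e)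
  then show ?case
    by (auto simp: vanishes_on_admissible_def pv_eq_mon se_eq_mon fmul_mon rep_diff rep_mon
        word_op_def gen_act_def locally_admissible_def dest!: admissible_locally_admissible)
next
  case (left a x)
  then show ?case
    by (simp add: fmul_eq_times vanishes_on_admissible_times_left)
next
  case (right a x)
  then show ?case
    by (simp add: fmul_eq_times vanishes_on_admissible_times_right)
qed (auto simp: vanishes_on_admissible_def pv_eq_mon se_eq_mon ses_eq_mon fmul_mon rep_diff rep_add
    rep_mon word_op_def gen_act_def)

lemma vanishes_on_admissible_spath:
  assumes "path_ok E0 E1 r s \<mu>" "prange r \<mu> \<in> H"
  shows "vanishes_on_admissible H (spath \<mu>)"
proof (cases \<mu>)
  case (Inl v)
  then show ?thesis
    using assms by (auto simp: vanishes_on_admissible_def pv_eq_mon rep_mon word_op_def gen_act_def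
        locally_admissible_def dest!: admissible_locally_admissible)
next
  case (Inr es)
  with assms obtain e es' where es: "es = e # es'"
    by (cases es) auto
  have "gen_act E1 r s (S e) \<xi> = None" if "admissible H \<xi>" for \<xi>
    using admissible_locally_admissible[OF that] assms Inr es
    by (auto simp: gen_act_def locally_admissible_def)
  then show ?thesis
    using Inr es by (simp add: vanishes_on_admissible_def rep_mon word_op_def)
qed

lemma vanishes_on_admissible_Mspace:
  assumes "V \<subseteq> H" "m \<in> Mspace E0 E1 r s V"
  shows "vanishes_on_admissible H m"
  using assms(2) unfolding Mspace_def
proof (induction rule: rspan.induct)
  case (base x)
  then show ?case
    using assms(1)
    by (auto simp: fmul_eq_times intro!: vanishes_on_admissible_times_right vanishes_on_admissible_spath)
qed (simp_all add: vanishes_on_admissible_zero vanishes_on_admissible_add fsmult_eq_times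
    vanishes_on_admissible_times_left)

lemma vanishes_on_admissible_MstarM:
  assumes "V \<subseteq> H" "y \<in> MstarM E0 E1 r s V"
  shows "vanishes_on_admissible H y"
  using assms(2) unfolding MstarM_def
proof (induction rule: rspan.induct)
  case (base x)
  then show ?case
    using vanishes_on_admissible_Mspace[OF assms(1)]
    by (auto simp: fmul_eq_times intro!: vanishes_on_admissible_times_left)
qed (simp_all add: vanishes_on_admissible_zero vanishes_on_admissible_add fsmult_eq_times
    vanishes_on_admissible_times_left)

lemma exists_admissible:
  assumes "w \<in> E0" "w \<notin> H"
  obtains \<xi> where "admissible H \<xi>" "fst \<xi> = w"
proof -
  obtain pick where pick:
    "\<And>u. u \<in> E0 \<Longrightarrow> regular u \<Longrightarrow> u \<notin> H \<Longrightarrow> pick u \<in> E1 \<and> r (pick u) = u \<and> s (pick u) \<notin> H"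
    using edge_leaving_H_choice by blast
  define step where "step u = (if regular u then s (pick u) else u)" for u
  define vs where "vs n = (step ^^ n) w" for n
  define f where "f n = (if regular (vs n) then Some (pick (vs n)) else None)" for n
  have vs_Suc: "vs (Suc n) = step (vs n)" for n
    by (simp add: vs_def)
  have vs: "vs n \<in> E0 \<and> vs n \<notin> H" for n
  proof (induction n)
    case 0
    then show ?case
      using assms by (simp add: vs_def)
  next
    case (Suc n)
    then show ?case
      using pick[of "vs n"] source_in_E0 by (auto simp: vs_Suc step_def)
  qed
  have vs_stays: "vs (i + n) = vs n" if "\<not> regular (vs n)" for n i
    by (induction i) (use that in \<open>auto simp: vs_Suc step_def\<close>)
  have shift_iter: "(shift ^^ n) (w, f) = (vs n, \<lambda>i. f (i + n))" for n
    by (induction n) (auto simp: vs_def shift_def vs_Suc step_def f_def)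
  have "locally_admissible H ((shift ^^ n) (w, f))" for n
  proof (cases "regular (vs n)")
    case True
    then show ?thesis
      using vs[of n] pick[of "vs n"] by (simp add: shift_iter locally_admissible_def f_def)
  next
    case False
    then have "f (i + n) = None" for i
      using vs_stays[OF False, of i] by (simp add: f_def)
    then show ?thesis
      using vs[of n] False by (simp add: shift_iter locally_admissible_def)
  qed
  then show ?thesis
    using that[of "(w, f)"] by (simp add: admissible_def)
qed

end

lemma SigmaH_eq_if_is_full:
  assumes "V \<subseteq> E0" "is_full TYPE('r::comm_ring_1) E0 E1 r s V"
  shows "SigmaH E0 E1 r s V = E0"
proof (rule ccontr)
  let ?H = "SigmaH E0 E1 r s V"
  note H = hereditary_SigmaH[of E0 E1 r s V] saturated_SigmaH[of E0 E1 r s V]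
  assume "?H \<noteq> E0"
  then obtain w where w: "w \<in> E0" "w \<notin> ?H"
    using SigmaH_subset_E0[OF assms(1)] by blast
  then obtain \<xi> where \<xi>: "admissible ?H \<xi>" "fst \<xi> = w"
    using exists_admissible[OF H] by blast
  have "pv w \<in> (free_alg E0 E1 :: (_ \<Rightarrow>\<^sub>0 'r) set)"
    using w by (simp add: free_alg_def pv_eq_mon mon_def gen_ok_def)
  then obtain y :: "_ \<Rightarrow>\<^sub>0 'r" where y: "y \<in> MstarM E0 E1 r s V" "pv w - y \<in> I"
    using assms(2) unfolding is_full_def by blast
  have "vanishes_on_admissible ?H (pv w - y + y)"
    using vanishes_on_admissible_add[OF H vanishes_on_admissible_ideal[OF H y(2)]
        vanishes_on_admissible_MstarM[OF H subset_SigmaH y(1)]] .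
  then have "rep E1 r s (pv w :: _ \<Rightarrow>\<^sub>0 'r) (\<lambda>_. 1) \<xi> = 0"
    using \<xi>(1) unfolding vanishes_on_admissible_def diff_add_cancel by blast
  moreover have "rep E1 r s (pv w :: _ \<Rightarrow>\<^sub>0 'r) (\<lambda>_. 1) \<xi> = 1"
    using \<xi>(2) by (simp add: pv_eq_mon rep_mon word_op_def gen_act_def)
  ultimately show False
    by simp
qed

end

theorem lemma3p2:
  fixes E0 :: "'v set" and E1 :: "'e set" and r s :: "'e \<Rightarrow> 'v" and V :: "'v set"
  assumes "countable E0" and "countable E1"
    and "r ` E1 \<subseteq> E0" and "s ` E1 \<subseteq> E0"
    and "V \<subseteq> E0"
  shows "is_full TYPE('r::comm_ring_1) E0 E1 r s V \<longleftrightarrow> SigmaH E0 E1 r s V = E0"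
proof -
  interpret leavitt_graph E0 E1 r s
    using assms(3,4) by unfold_locales blast+
  show ?thesis
    using is_full_if_SigmaH_eq[OF assms(5)] SigmaH_eq_if_is_full[OF assms(5)] by blast
qed

end
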